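(* Let $K$ be a nonempty compact convex set in $\mathbb{R}^n$ and $u$ a unit vector. Then $$\Omega(\mathrm{s}_uK)\ge\Omega(K).$$ If $K$ has nonempty interior, equality holds if and only if $\mathrm{s}_uK=K$.
   Context: For a nonempty compact convex $K\subseteq\mathbb{R}^n$ and a unit vector $u$, the Steiner symmetrization $\mathrm{s}_uK$ is defined as follows: for each point $x$ of the orthogonal projection $\pi_uK$ of $K$ onto $u^\perp$, let $\ell_x(K)$ be the length of the segment $K\cap(x+\mathbb{R}u)$; then $\mathrm{s}_uK=\{x+tu:\ x\in\pi_uK,\ |t|\le \tfrac12\ell_x(K)\}$. $B$ is the closed unit ball centered at the origin, $V_n$ is $n$-dimensional volume. The layering function is $\Omega(K)=\int_0^\infty V_n(K\cap rB)\,e^{-r^2}\,dr$. *)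

theory Defs
  imports "HOL-Analysis.Analysis"
begin

definition perp_proj :: "'a::euclidean_space \<Rightarrow> 'a \<Rightarrow> 'a" where
  "perp_proj u x = x - (x \<bullet> u) *\<^sub>R u"

text \<open>Length of the chord K \<inter> (x + \<real>u), measured as the 1-dimensional Lebesgue
  measure of the parameter set (u is a unit vector).\<close>
definition chord_length :: "'a::euclidean_space \<Rightarrow> 'a set \<Rightarrow> 'a \<Rightarrow> real" where
  "chord_length u K x = measure lborel {t::real. x + t *\<^sub>R u \<in> K}"

definition steiner :: "'a::euclidean_space \<Rightarrow> 'a set \<Rightarrow> 'a set" where
  "steiner u K = {x + t *\<^sub>R u | x t. x \<in> perp_proj u ` K \<and> \<bar>t\<bar> \<le> chord_length u K x / 2}"

definition layering :: "'a::euclidean_space set \<Rightarrow> real" where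
  "layering K = (\<integral>r\<in>{0..}. measure lebesgue (K \<inter> cball 0 r) * exp (- (r\<^sup>2)) \<partial>lborel)"

end

theory Submission
  imports Defs "HOL-Probability.Distributions"
begin

(* The proof compares K and s_u K line by line.  On a line w + \<real>u (w \<perpendicular> u) the chord of
   a compact convex K is an interval [a,b], the chord of s_u K is the centred interval
   [-(b-a)/2,(b-a)/2], and the chord of rB is a centred interval [-\<rho>,\<rho>]; a centred interval
   meets [-\<rho>,\<rho>] in at least as much length as any interval of the same length.  A
   Cavalieri principle in direction u turns this into V(K \<inter> rB) \<le> V(s_u K \<inter> rB) for all r,
   which gives the inequality after integration against e^(-r^2).

   For the equality case, a point of K outside s_u K yields a small ball in K \<setminus> s_u K.  For
   all lines through a cylinder around that ball and all radii r in a short interval, the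
   line-wise comparison holds with a uniform gain; this gives a uniform gap between the layer
   volumes on an interval of radii, hence a strict inequality for Omega.  Finally K \<subseteq> s_u K
   already forces s_u K = K. *)

section \<open>Lines in direction u\<close>

lemma perp_proj_orthogonal: "norm u = 1 \<Longrightarrow> perp_proj u z \<bullet> u = 0"
  by (simp add: perp_proj_def inner_diff_left norm_eq_1)

lemma perp_proj_decomp: "perp_proj u z + (z \<bullet> u) *\<^sub>R u = z"
  by (simp add: perp_proj_def)

lemma perp_proj_add_line: "norm u = 1 \<Longrightarrow> perp_proj u (z + t *\<^sub>R u) = perp_proj u z"
  by (simp add: perp_proj_def inner_add_left norm_eq_1 algebra_simps)

lemma perp_proj_fixed: "w \<bullet> u = 0 \<Longrightarrow> perp_proj u w = w"
  by (simp add: perp_proj_def)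

lemma perp_proj_line: "norm u = 1 \<Longrightarrow> w \<bullet> u = 0 \<Longrightarrow> perp_proj u (w + t *\<^sub>R u) = w"
  by (simp add: perp_proj_add_line perp_proj_fixed)

lemma perp_proj_diff: "perp_proj u (x - y) = perp_proj u x - perp_proj u y"
  by (simp add: perp_proj_def inner_diff_left algebra_simps)

lemma norm_perp_proj_le:
  assumes "norm u = 1" shows "norm (perp_proj u x) \<le> norm x"
proof -
  have "perp_proj u x \<bullet> perp_proj u x = x \<bullet> x - (x \<bullet> u)\<^sup>2"
    using assms by (simp add: perp_proj_def norm_eq_1 inner_diff_left inner_diff_right
        inner_commute power2_eq_square)
  then have "(norm (perp_proj u x))\<^sup>2 \<le> (norm x)\<^sup>2" by (simp add: power2_norm_eq_inner)
  then show ?thesis using power2_le_imp_le by fastforce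
qed

lemma continuous_perp_proj: "continuous_on UNIV (perp_proj u)"
  unfolding perp_proj_def[abs_def] by (intro continuous_intros)

lemma borel_measurable_perp_proj[measurable]: "perp_proj u \<in> borel_measurable borel"
  by (rule borel_measurable_continuous_onI[OF continuous_perp_proj])

lemma inner_line: "norm u = 1 \<Longrightarrow> w \<bullet> u = 0 \<Longrightarrow> (w + t *\<^sub>R u) \<bullet> u = t"
  by (simp add: inner_add_left norm_eq_1)

lemma norm_line: "norm u = 1 \<Longrightarrow> w \<bullet> u = 0 \<Longrightarrow> (norm (w + t *\<^sub>R u))\<^sup>2 = (norm w)\<^sup>2 + t\<^sup>2"
  unfolding power2_norm_eq_inner
  by (simp add: norm_eq_1 inner_add_left inner_add_right inner_commute power2_eq_square)

lemma cball_chord: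
  assumes u: "norm u = 1" and w: "w \<bullet> u = 0"
  shows "{t. w + t *\<^sub>R u \<in> cball 0 r} =
    (if norm w \<le> r then {- sqrt (r\<^sup>2 - (norm w)\<^sup>2) .. sqrt (r\<^sup>2 - (norm w)\<^sup>2)} else {})"
proof -
  have sqrt_iff: "t\<^sup>2 \<le> X \<longleftrightarrow> \<bar>t\<bar> \<le> sqrt X" for t X :: real
  proof
    show "t\<^sup>2 \<le> X \<Longrightarrow> \<bar>t\<bar> \<le> sqrt X" by (rule real_le_rsqrt) simp
  qed (rule sqrt_ge_absD)
  have "w + t *\<^sub>R u \<in> cball 0 r \<longleftrightarrow>
      t \<in> (if norm w \<le> r then {- sqrt (r\<^sup>2 - (norm w)\<^sup>2) .. sqrt (r\<^sup>2 - (norm w)\<^sup>2)} else {})" for t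
  proof -
    have "w + t *\<^sub>R u \<in> cball 0 r \<longleftrightarrow> 0 \<le> r \<and> (norm w)\<^sup>2 + t\<^sup>2 \<le> r\<^sup>2"
      using norm_line[OF u w, of t] by (simp add: norm_le_square power2_norm_eq_inner)
    also have "\<dots> \<longleftrightarrow> norm w \<le> r \<and> t\<^sup>2 \<le> r\<^sup>2 - (norm w)\<^sup>2"
    proof
      assume h: "0 \<le> r \<and> (norm w)\<^sup>2 + t\<^sup>2 \<le> r\<^sup>2"
      then have "(norm w)\<^sup>2 \<le> r\<^sup>2" using zero_le_power2[of t] by linarith
      then have "norm w \<le> r" using h power2_le_imp_le by blast
      with h show "norm w \<le> r \<and> t\<^sup>2 \<le> r\<^sup>2 - (norm w)\<^sup>2" by simp
    qed (use norm_ge_zero[of w] in linarith)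
    also have "\<dots> \<longleftrightarrow> norm w \<le> r \<and> \<bar>t\<bar> \<le> sqrt (r\<^sup>2 - (norm w)\<^sup>2)"
      by (simp only: sqrt_iff)
    also have "\<dots> \<longleftrightarrow>
        t \<in> (if norm w \<le> r then {- sqrt (r\<^sup>2 - (norm w)\<^sup>2) .. sqrt (r\<^sup>2 - (norm w)\<^sup>2)} else {})"
      by (auto simp: abs_le_iff)
    finally show ?thesis .
  qed
  then show ?thesis by blast
qed

section \<open>Chords of a convex body and of its Steiner symmetral\<close>

lemma steiner_mem:
  assumes u: "norm u = 1" and w: "w \<bullet> u = 0"
  shows "w + t *\<^sub>R u \<in> steiner u K \<longleftrightarrow> w \<in> perp_proj u ` K \<and> \<bar>t\<bar> \<le> chord_length u K w / 2"
proof
  assume "w + t *\<^sub>R u \<in> steiner u K"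
  then obtain x t' where x: "w + t *\<^sub>R u = x + t' *\<^sub>R u" "x \<in> perp_proj u ` K"
      "\<bar>t'\<bar> \<le> chord_length u K x / 2"
    unfolding steiner_def by blast
  have xu: "x \<bullet> u = 0" using x(2) perp_proj_orthogonal[OF u] by auto
  have "w = x" using arg_cong[OF x(1), of "perp_proj u"] by (simp add: perp_proj_line[OF u] w xu)
  moreover have "t = t'" using x(1) inner_line[OF u w, of t] inner_line[OF u xu, of t'] by simp
  ultimately show "w \<in> perp_proj u ` K \<and> \<bar>t\<bar> \<le> chord_length u K w / 2" using x by simp
qed (auto simp: steiner_def)

lemma steiner_chord:
  assumes u: "norm u = 1" and w: "w \<bullet> u = 0" and wK: "w \<in> perp_proj u ` K"
  shows "{t. w + t *\<^sub>R u \<in> steiner u K} = {-(chord_length u K w / 2) .. chord_length u K w / 2}"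
  using steiner_mem[OF u w] wK by (auto simp: abs_le_iff)

lemma chord_outside_projection:
  assumes u: "norm u = 1" and w: "w \<bullet> u = 0" and "w \<notin> perp_proj u ` K"
  shows "{t. w + t *\<^sub>R u \<in> K} = {}"
proof -
  have "w + t *\<^sub>R u \<notin> K" for t
    using assms(3) image_eqI[of w "perp_proj u" "w + t *\<^sub>R u" K]
    by (auto simp: perp_proj_line[OF u w])
  then show ?thesis by auto
qed

lemma chord_interval:
  fixes K :: "'a::euclidean_space set"
  assumes K: "compact K" "convex K" and u: "norm u = 1" and w: "w \<in> perp_proj u ` K"
  obtains a b where "a \<le> b" "{t. w + t *\<^sub>R u \<in> K} = {a..b}" "chord_length u K w = b - a"
proof -
  define C where "C = {t. w + t *\<^sub>R u \<in> K}"
  have line: "C = (\<lambda>t::real. w + t *\<^sub>R u) -` K" unfolding C_def by auto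
  have "compact C"
  proof -
    have "closed C" unfolding line using compact_imp_closed[OF K(1)]
      by (simp add: continuous_closed_vimage continuous_intros)
    moreover obtain R where R: "\<And>x. x \<in> K \<Longrightarrow> norm x \<le> R"
      using compact_imp_bounded[OF K(1)] bounded_iff by blast
    have "\<bar>t\<bar> \<le> R + norm w" if "t \<in> C" for t
      using norm_triangle_ineq4[of "w + t *\<^sub>R u" w] R[of "w + t *\<^sub>R u"] that u
      unfolding C_def by simp
    then have "bounded C" unfolding bounded_iff by (metis real_norm_def)
    ultimately show ?thesis by (simp add: compact_eq_bounded_closed)
  qed
  moreover have "convex C"
  proof -
    have "C = (\<lambda>t. t *\<^sub>R u) -` ((\<lambda>k. k - w) ` K)"
      unfolding C_def by (auto simp: image_iff algebra_simps)
    then show ?thesis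
      using convex_linear_vimage[OF linear_scaleR_left convex_translation_subtract[OF K(2)]] by simp
  qed
  ultimately obtain a b where ab: "C = {a..b}"
    using connected_compact_interval_1[of C] convex_connected \<open>compact C\<close> by blast
  obtain k where k: "k \<in> K" "w = perp_proj u k" using w by auto
  then have "k \<bullet> u \<in> C" using perp_proj_decomp[of u k] unfolding C_def by simp
  then have "a \<le> b" using ab by simp
  moreover have "chord_length u K w = b - a"
    using ab \<open>a \<le> b\<close> unfolding chord_length_def C_def by simp
  ultimately show ?thesis using that ab C_def by blast
qed

text \<open>The Steiner symmetral is the image of a compact set under a continuous map: a pair of
  points of K on a common line in direction u and a parameter \<theta> \<in> [-1,1] produce the point
  \<theta> times half the signed distance from the projection.\<close>

lemma steiner_image:
  fixes K :: "'a::euclidean_space set"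
  assumes K: "compact K" "convex K" and u: "norm u = 1"
  shows "steiner u K = (\<lambda>(k1,k2,\<theta>). perp_proj u k1 + (\<theta> * ((k2 \<bullet> u - k1 \<bullet> u) / 2)) *\<^sub>R u) `
     ((K \<times> (K \<times> {-1..1::real})) \<inter> {p. perp_proj u (fst p) = perp_proj u (fst (snd p))})"
  (is "_ = ?f ` ?T")
proof
  show "steiner u K \<subseteq> ?f ` ?T"
  proof
    fix p assume p: "p \<in> steiner u K"
    then obtain w t where wt: "p = w + t *\<^sub>R u" "w \<in> perp_proj u ` K" "\<bar>t\<bar> \<le> chord_length u K w / 2"
      unfolding steiner_def by blast
    have wu: "w \<bullet> u = 0" using wt(2) perp_proj_orthogonal[OF u] by auto
    obtain a b where ab: "a \<le> b" "{t. w + t *\<^sub>R u \<in> K} = {a..b}" "chord_length u K w = b - a"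
      using chord_interval[OF K u wt(2)] by blast
    define \<theta> where "\<theta> = (if b = a then 0 else 2 * t / (b - a))"
    have "(w + a *\<^sub>R u, w + b *\<^sub>R u, \<theta>) \<in> ?T"
      using ab wt(3) by (auto simp: perp_proj_line[OF u wu] \<theta>_def abs_le_iff field_simps)
    moreover have "p = ?f (w + a *\<^sub>R u, w + b *\<^sub>R u, \<theta>)"
      using wt ab by (auto simp: perp_proj_line[OF u wu] inner_line[OF u wu] \<theta>_def)
    ultimately show "p \<in> ?f ` ?T" by (rule rev_image_eqI)
  qed
next
  show "?f ` ?T \<subseteq> steiner u K"
  proof (rule image_subsetI)
    fix x assume "x \<in> ?T"
    obtain k1 k2 \<theta> where x: "x = (k1, k2, \<theta>)" by (cases x)
    have k: "k1 \<in> K" "k2 \<in> K" "\<bar>\<theta>\<bar> \<le> 1" "perp_proj u k1 = perp_proj u k2"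
      using \<open>x \<in> ?T\<close> unfolding x by auto
    define w where "w = perp_proj u k1"
    have wK: "w \<in> perp_proj u ` K" using k unfolding w_def by auto
    have wu: "w \<bullet> u = 0" unfolding w_def using perp_proj_orthogonal[OF u] by auto
    obtain a b where ab: "a \<le> b" "{t. w + t *\<^sub>R u \<in> K} = {a..b}" "chord_length u K w = b - a"
      using chord_interval[OF K u wK] by blast
    have "w + (k1 \<bullet> u) *\<^sub>R u = k1" "w + (k2 \<bullet> u) *\<^sub>R u = k2"
      using perp_proj_decomp[of u k1] perp_proj_decomp[of u k2] k(4) unfolding w_def by auto
    then have "k1 \<bullet> u \<in> {a..b}" "k2 \<bullet> u \<in> {a..b}" using k ab(2) by (metis mem_Collect_eq)+
    then have "\<bar>(k2 \<bullet> u - k1 \<bullet> u) / 2\<bar> \<le> (b - a) / 2" by auto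
    then have "\<bar>\<theta> * ((k2 \<bullet> u - k1 \<bullet> u) / 2)\<bar> \<le> 1 * ((b - a) / 2)"
      unfolding abs_mult using k(3) by (intro mult_mono) auto
    then show "?f x \<in> steiner u K"
      using steiner_mem[OF u wu] wK ab(3) unfolding w_def x by simp
  qed
qed

lemma steiner_compact:
  fixes K :: "'a::euclidean_space set"
  assumes K: "compact K" "convex K" and u: "norm u = 1"
  shows "compact (steiner u K)"
proof -
  have "closed {p::'a \<times> 'a \<times> real. perp_proj u (fst p) = perp_proj u (fst (snd p))}"
    unfolding perp_proj_def by (intro closed_Collect_eq continuous_intros)
  then have "compact ((K \<times> (K \<times> {-1..1::real})) \<inter> {p. perp_proj u (fst p) = perp_proj u (fst (snd p))})"
    using K(1) by (intro compact_Int_closed compact_Times) auto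
  moreover have cont: "continuous_on UNIV
      (\<lambda>(k1::'a,k2::'a,\<theta>::real). perp_proj u k1 + (\<theta> * ((k2 \<bullet> u - k1 \<bullet> u) / 2)) *\<^sub>R u)"
    unfolding perp_proj_def case_prod_unfold by (intro continuous_intros) simp
  ultimately show ?thesis unfolding steiner_image[OF K u]
    by (intro compact_continuous_image continuous_on_subset[OF cont]) auto
qed

text \<open>If K is contained in its Steiner symmetral, the two coincide: every chord [a,b] of K
  then lies in the centred interval of the same length, so it is that interval.\<close>

lemma steiner_eq_if_superset:
  fixes K :: "'a::euclidean_space set"
  assumes K: "compact K" "convex K" and u: "norm u = 1" and sub: "K \<subseteq> steiner u K"
  shows "steiner u K = K"
proof
  show "steiner u K \<subseteq> K"
  proof
    fix p assume "p \<in> steiner u K"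
    then obtain w t where wt: "p = w + t *\<^sub>R u" "w \<in> perp_proj u ` K" "\<bar>t\<bar> \<le> chord_length u K w / 2"
      unfolding steiner_def by blast
    have wu: "w \<bullet> u = 0" using wt(2) perp_proj_orthogonal[OF u] by auto
    obtain a b where ab: "a \<le> b" "{t. w + t *\<^sub>R u \<in> K} = {a..b}" "chord_length u K w = b - a"
      using chord_interval[OF K u wt(2)] by blast
    have "w + a *\<^sub>R u \<in> steiner u K" "w + b *\<^sub>R u \<in> steiner u K" using ab sub by auto
    then have "\<bar>a\<bar> \<le> (b - a) / 2" "\<bar>b\<bar> \<le> (b - a) / 2" using steiner_mem[OF u wu] ab(3) by auto
    then have "t \<in> {a..b}" using wt(3) ab(3) by (auto simp: abs_le_iff)
    then show "p \<in> K" using ab(2) wt(1) by auto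
  qed
qed (fact sub)

section \<open>Cavalieri's principle along a direction\<close>

abbreviation line_slice :: "'a::euclidean_space \<Rightarrow> 'a set \<Rightarrow> 'a \<Rightarrow> ennreal" where
  "line_slice u A z \<equiv> emeasure lborel {t::real. z + t *\<^sub>R u \<in> A}"

lemma nn_integral_lborel_split_basis:
  fixes b0 :: "'a::euclidean_space" and \<Phi> :: "'a \<Rightarrow> ennreal"
  assumes b0: "b0 \<in> Basis" and [measurable]: "\<Phi> \<in> borel_measurable borel"
  shows "(\<integral>\<^sup>+z. \<Phi> z \<partial>lborel) =
    (\<integral>\<^sup>+x. (\<integral>\<^sup>+s. \<Phi> ((\<Sum>b\<in>Basis-{b0}. x b *\<^sub>R b) + s *\<^sub>R b0) \<partial>lborel) \<partial>(\<Pi>\<^sub>M b\<in>Basis-{b0}. lborel))"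
proof -
  interpret product_sigma_finite "\<lambda>_::'a. lborel::real measure" by standard
  have sum_insert: "(\<Sum>b\<in>insert b0 (Basis - {b0}). (x(b0:=s)) b *\<^sub>R b) = (\<Sum>b\<in>Basis-{b0}. x b *\<^sub>R b) + s *\<^sub>R b0"
    for x s by (subst sum.insert) (auto simp: add.commute intro!: sum.cong)
  have "(\<integral>\<^sup>+z. \<Phi> z \<partial>lborel) = (\<integral>\<^sup>+f. \<Phi> (\<Sum>b\<in>Basis. f b *\<^sub>R b) \<partial>(\<Pi>\<^sub>M b\<in>Basis. lborel))"
    by (subst lborel_eq) (simp add: nn_integral_distr)
  also have "Basis = insert b0 (Basis - {b0})" using b0 by auto
  also have "(\<integral>\<^sup>+f. \<Phi> (\<Sum>b\<in>insert b0 (Basis - {b0}). f b *\<^sub>R b) \<partial>(\<Pi>\<^sub>M b\<in>insert b0 (Basis - {b0}). lborel))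
     = (\<integral>\<^sup>+x. (\<integral>\<^sup>+s. \<Phi> (\<Sum>b\<in>insert b0 (Basis - {b0}). (x(b0:=s)) b *\<^sub>R b) \<partial>lborel) \<partial>(\<Pi>\<^sub>M b\<in>Basis-{b0}. lborel))"
    by (rule product_nn_integral_insert) auto
  finally show ?thesis by (simp only: sum_insert)
qed

text \<open>This follows from translation invariance of lborel,
  applied to the product of the integrand with the indicator of a unit layer along b0.\<close>

lemma nn_integral_hyperplane_translate:
  fixes b0 v :: "'a::euclidean_space" and \<phi> :: "'a \<Rightarrow> ennreal"
  assumes b0: "b0 \<in> Basis" and v: "v \<bullet> b0 = 0" and [measurable]: "\<phi> \<in> borel_measurable borel"
  shows "(\<integral>\<^sup>+x. \<phi> ((\<Sum>b\<in>Basis-{b0}. x b *\<^sub>R b) + v) \<partial>(\<Pi>\<^sub>M b\<in>Basis-{b0}. lborel)) =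
         (\<integral>\<^sup>+x. \<phi> (\<Sum>b\<in>Basis-{b0}. x b *\<^sub>R b) \<partial>(\<Pi>\<^sub>M b\<in>Basis-{b0}. lborel))"
proof -
  define P where "P x = (\<Sum>b\<in>Basis-{b0}. x b *\<^sub>R b)" for x :: "'a \<Rightarrow> real"
  define \<Phi> where "\<Phi> z = \<phi> (z - (z \<bullet> b0) *\<^sub>R b0) * indicator {0..1::real} (z \<bullet> b0)" for z
  have [measurable]: "\<Phi> \<in> borel_measurable borel" unfolding \<Phi>_def by measurable
  have P_orth: "P x \<bullet> b0 = 0" for x
    using b0 by (simp add: P_def inner_sum_left inner_Basis)
  have layer: "(\<integral>\<^sup>+z. \<Phi> (w + z) \<partial>lborel) = (\<integral>\<^sup>+x. \<phi> (P x + w) \<partial>(\<Pi>\<^sub>M b\<in>Basis-{b0}. lborel))"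
    if w: "w \<bullet> b0 = 0" for w
  proof -
    have "\<Phi> (w + (P x + s *\<^sub>R b0)) = \<phi> (P x + w) * indicator {0..1} s" for x s
      using b0 w P_orth[of x] by (simp add: \<Phi>_def inner_add_left algebra_simps)
    then have "(\<integral>\<^sup>+z. \<Phi> (w + z) \<partial>lborel) =
        (\<integral>\<^sup>+x. (\<integral>\<^sup>+s. \<phi> (P x + w) * indicator {0..1::real} s \<partial>lborel) \<partial>(\<Pi>\<^sub>M b\<in>Basis-{b0}. lborel))"
      using nn_integral_lborel_split_basis[OF b0, of "\<lambda>z. \<Phi> (w + z)"] by (simp add: P_def)
    then show ?thesis by (simp add: nn_integral_cmult_indicator)
  qed
  have "(\<integral>\<^sup>+z. \<Phi> (v + z) \<partial>lborel) = (\<integral>\<^sup>+z. \<Phi> z \<partial>lborel)"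
    by (subst (2) lborel_affine[of 1 v]) (simp_all add: nn_integral_density nn_integral_distr)
  then show ?thesis using layer[OF v] layer[of 0] by (simp add: P_def)
qed

text \<open>Integration over lborel by lines in an arbitrary direction u: parametrise the space by
  the coordinate hyperplane orthogonal to b0 and the line \<real>u; when u \<bullet> b0 \<noteq> 0 this is a
  linear change of variables with Jacobian |u \<bullet> b0|.\<close>

lemma nn_integral_lborel_lines:
  fixes b0 u :: "'a::euclidean_space" and \<Phi> :: "'a \<Rightarrow> ennreal"
  assumes b0: "b0 \<in> Basis" and c: "u \<bullet> b0 \<noteq> 0" and [measurable]: "\<Phi> \<in> borel_measurable borel"
  shows "(\<integral>\<^sup>+z. \<Phi> z \<partial>lborel) = ennreal \<bar>u \<bullet> b0\<bar> *
    (\<integral>\<^sup>+x. (\<integral>\<^sup>+y. \<Phi> ((\<Sum>b\<in>Basis-{b0}. x b *\<^sub>R b) + y *\<^sub>R u) \<partial>lborel) \<partial>(\<Pi>\<^sub>M b\<in>Basis-{b0}. lborel))"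
proof -
  define c where "c = u \<bullet> b0"
  define M where "M = (\<Pi>\<^sub>M b\<in>Basis-{b0}. (lborel::real measure))"
  define P where "P x = (\<Sum>b\<in>Basis-{b0}. x b *\<^sub>R b)" for x :: "'a \<Rightarrow> real"
  interpret product_sigma_finite "\<lambda>_::'a. lborel::real measure" by standard
  have "sigma_finite_measure M" unfolding M_def by (rule sigma_finite) auto
  then interpret pair_sigma_finite M "lborel::real measure"
    by (simp add: lborel.sigma_finite_measure_axioms pair_sigma_finite.intro)
  have [measurable]: "P \<in> borel_measurable M" unfolding P_def M_def by measurable
  have shear: "(\<integral>\<^sup>+x. \<Phi> (P x + y *\<^sub>R u) \<partial>M) = (\<integral>\<^sup>+x. \<Phi> (P x + (c * y) *\<^sub>R b0) \<partial>M)" for y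
  proof -
    have "(y *\<^sub>R (u - c *\<^sub>R b0)) \<bullet> b0 = 0" using b0 by (simp add: c_def inner_diff_left)
    from nn_integral_hyperplane_translate[OF b0 this, of "\<lambda>z. \<Phi> (z + (c * y) *\<^sub>R b0)"]
    show ?thesis by (simp add: M_def P_def algebra_simps)
  qed
  have "(\<integral>\<^sup>+z. \<Phi> z \<partial>lborel) = (\<integral>\<^sup>+x. (\<integral>\<^sup>+s. \<Phi> (P x + s *\<^sub>R b0) \<partial>lborel) \<partial>M)"
    unfolding M_def P_def by (rule nn_integral_lborel_split_basis[OF b0]) measurable
  also have "\<dots> = (\<integral>\<^sup>+x. ennreal \<bar>c\<bar> * (\<integral>\<^sup>+y. \<Phi> (P x + (c * y) *\<^sub>R b0) \<partial>lborel) \<partial>M)"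
    using nn_integral_real_affine[of "\<lambda>s. \<Phi> (P _ + s *\<^sub>R b0)" c 0] c by (simp add: c_def)
  also have "\<dots> = ennreal \<bar>c\<bar> * (\<integral>\<^sup>+x. (\<integral>\<^sup>+y. \<Phi> (P x + (c * y) *\<^sub>R b0) \<partial>lborel) \<partial>M)"
    by (rule nn_integral_cmult) measurable
  also have "(\<integral>\<^sup>+x. (\<integral>\<^sup>+y. \<Phi> (P x + (c * y) *\<^sub>R b0) \<partial>lborel) \<partial>M)
      = (\<integral>\<^sup>+y. (\<integral>\<^sup>+x. \<Phi> (P x + (c * y) *\<^sub>R b0) \<partial>M) \<partial>lborel)"
    by (rule Fubini'[symmetric]) measurable
  also have "\<dots> = (\<integral>\<^sup>+y. (\<integral>\<^sup>+x. \<Phi> (P x + y *\<^sub>R u) \<partial>M) \<partial>lborel)"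
    by (simp add: shear)
  also have "\<dots> = (\<integral>\<^sup>+x. (\<integral>\<^sup>+y. \<Phi> (P x + y *\<^sub>R u) \<partial>lborel) \<partial>M)"
    by (rule Fubini') measurable
  finally show ?thesis unfolding c_def M_def P_def .
qed

lemma line_slice_nn_integral:
  assumes [measurable]: "A \<in> sets borel"
  shows "line_slice u A p = (\<integral>\<^sup>+y. indicator A (p + y *\<^sub>R u) \<partial>lborel)"
proof -
  have [measurable]: "{y. p + y *\<^sub>R u \<in> A} \<in> sets lborel" by measurable
  have "(\<integral>\<^sup>+y. indicator A (p + y *\<^sub>R u) \<partial>lborel) = (\<integral>\<^sup>+y. indicator {y. p + y *\<^sub>R u \<in> A} y \<partial>lborel)"
    by (simp add: indicator_def)
  then show ?thesis by simp
qed

lemma emeasure_lborel_lines: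
  fixes b0 u :: "'a::euclidean_space"
  assumes b0: "b0 \<in> Basis" and c: "u \<bullet> b0 \<noteq> 0" and [measurable]: "A \<in> sets borel"
  shows "emeasure lborel A = ennreal \<bar>u \<bullet> b0\<bar> *
      (\<integral>\<^sup>+x. line_slice u A (\<Sum>b\<in>Basis-{b0}. x b *\<^sub>R b) \<partial>(\<Pi>\<^sub>M b\<in>Basis-{b0}. lborel))"
    and "(\<lambda>x. line_slice u A (\<Sum>b\<in>Basis-{b0}. x b *\<^sub>R b)) \<in> borel_measurable (\<Pi>\<^sub>M b\<in>Basis-{b0}. lborel)"
proof -
  have "emeasure lborel A = (\<integral>\<^sup>+z. indicator A z \<partial>lborel)" by simp
  also have "\<dots> = ennreal \<bar>u \<bullet> b0\<bar> *
    (\<integral>\<^sup>+x. (\<integral>\<^sup>+y. indicator A ((\<Sum>b\<in>Basis-{b0}. x b *\<^sub>R b) + y *\<^sub>R u) \<partial>lborel) \<partial>(\<Pi>\<^sub>M b\<in>Basis-{b0}. lborel))"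
    by (rule nn_integral_lborel_lines[OF b0 c]) measurable
  finally show "emeasure lborel A = ennreal \<bar>u \<bullet> b0\<bar> *
      (\<integral>\<^sup>+x. line_slice u A (\<Sum>b\<in>Basis-{b0}. x b *\<^sub>R b) \<partial>(\<Pi>\<^sub>M b\<in>Basis-{b0}. lborel))"
    by (simp add: line_slice_nn_integral)
  have "(\<lambda>x. \<integral>\<^sup>+y. indicator A ((\<Sum>b\<in>Basis-{b0}. x b *\<^sub>R b) + y *\<^sub>R u) \<partial>lborel)
      \<in> borel_measurable (\<Pi>\<^sub>M b\<in>Basis-{b0}. lborel)"
    by measurable
  then show "(\<lambda>x. line_slice u A (\<Sum>b\<in>Basis-{b0}. x b *\<^sub>R b)) \<in> borel_measurable (\<Pi>\<^sub>M b\<in>Basis-{b0}. lborel)"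
    by (simp add: line_slice_nn_integral)
qed

lemma line_slice_shift:
  assumes [measurable]: "A \<in> sets borel"
  shows "line_slice u A (z + s *\<^sub>R u) = line_slice u A z"
proof -
  have [measurable]: "{t. z + t *\<^sub>R u \<in> A} \<in> sets borel" by measurable
  have "{t. z + s *\<^sub>R u + t *\<^sub>R u \<in> A} = (+) s -` {t. z + t *\<^sub>R u \<in> A}"
    by (auto simp: algebra_simps)
  then show ?thesis
    by (subst (2) lborel_distr_plus[of s, symmetric]) (simp add: emeasure_distr)
qed

lemma line_slice_perp_proj:
  assumes "A \<in> sets borel" shows "line_slice u A z = line_slice u A (perp_proj u z)"
  using line_slice_shift[OF assms, of "perp_proj u z" "z \<bullet> u" u] by (simp add: perp_proj_decomp)

lemma emeasure_le_by_slices: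
  fixes u :: "'a::euclidean_space" and c :: ennreal
  assumes "u \<noteq> 0" and [measurable]: "A \<in> sets borel" "A0 \<in> sets borel" "B \<in> sets borel"
    and slices: "\<And>z. line_slice u A z + c * line_slice u A0 z \<le> line_slice u B z"
  shows "emeasure lborel A + c * emeasure lborel A0 \<le> emeasure lborel B"
proof -
  obtain b0 :: 'a where b0: "b0 \<in> Basis" "u \<bullet> b0 \<noteq> 0"
    using \<open>u \<noteq> 0\<close> euclidean_all_zero_iff by blast
  let ?M = "\<Pi>\<^sub>M b\<in>Basis-{b0}. (lborel::real measure)"
  let ?P = "\<lambda>x. \<Sum>b\<in>Basis-{b0}. x b *\<^sub>R b"
  have [measurable]: "(\<lambda>x. line_slice u S (?P x)) \<in> borel_measurable ?M" if "S \<in> sets borel" for S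
    using emeasure_lborel_lines(2)[OF b0 that] .
  have "emeasure lborel A + c * emeasure lborel A0 = ennreal \<bar>u \<bullet> b0\<bar> *
      ((\<integral>\<^sup>+x. line_slice u A (?P x) \<partial>?M) + c * (\<integral>\<^sup>+x. line_slice u A0 (?P x) \<partial>?M))"
    by (simp add: emeasure_lborel_lines(1)[OF b0] distrib_left mult.left_commute)
  also have "\<dots> = ennreal \<bar>u \<bullet> b0\<bar> * (\<integral>\<^sup>+x. line_slice u A (?P x) + c * line_slice u A0 (?P x) \<partial>?M)"
    by (simp add: nn_integral_add nn_integral_cmult)
  also have "\<dots> \<le> ennreal \<bar>u \<bullet> b0\<bar> * (\<integral>\<^sup>+x. line_slice u B (?P x) \<partial>?M)"
    by (intro mult_left_mono nn_integral_mono slices) simp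
  also have "\<dots> = emeasure lborel B"
    by (simp add: emeasure_lborel_lines(1)[OF b0])
  finally show ?thesis .
qed

lemma measure_le_by_slices:
  fixes u :: "'a::euclidean_space"
  assumes "u \<noteq> 0" and "A \<in> sets borel" "A0 \<in> sets borel" "B \<in> sets borel"
    and "bounded A" "bounded A0" "bounded B" and "0 \<le> c"
    and "\<And>z. line_slice u A z + ennreal c * line_slice u A0 z \<le> line_slice u B z"
  shows "measure lborel A + c * measure lborel A0 \<le> measure lborel B"
proof -
  have fin: "emeasure lborel S = ennreal (measure lborel S)" if "bounded S" for S :: "'a set"
    using emeasure_bounded_finite[OF that] by (intro emeasure_eq_ennreal_measure) auto
  have "ennreal (measure lborel A + c * measure lborel A0) \<le> ennreal (measure lborel B)"
    using emeasure_le_by_slices[OF assms(1-4,9)] \<open>0 \<le> c\<close> assms(5-7)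
    by (simp add: fin ennreal_plus ennreal_mult)
  then show ?thesis by (simp add: ennreal_le_iff)
qed

section \<open>Comparison along a single line\<close>

text \<open>Among intervals of a given length, the centred one meets the centred interval
  [-\<rho>,\<rho>] in the largest length.\<close>

lemma interval_overlap_le_centered:
  fixes a b \<rho> :: real
  assumes "a \<le> b" "0 \<le> \<rho>"
  shows "min b \<rho> - max a (-\<rho>) \<le> min ((b-a)/2) \<rho> - max (-((b-a)/2)) (-\<rho>)"
  using assms by (auto simp: min_def max_def)

text \<open>Quantitative version: if a piece of length \<delta> of the interval [a,b] around m lies
  outside the centred interval of the same length, and \<rho> is within \<delta>/4 of |m|, then the
  centred interval wins by at least \<delta>/4.\<close>

lemma interval_overlap_gap:
  fixes a b m \<delta> \<rho> :: real
  assumes \<delta>: "0 < \<delta>" and am: "a \<le> m - \<delta>/2" and mb: "m + \<delta>/2 \<le> b"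
    and outside: "\<And>t. \<bar>t - m\<bar> \<le> \<delta>/2 \<Longrightarrow> (b - a)/2 < \<bar>t\<bar>"
    and \<rho>: "\<bar>\<rho> - \<bar>m\<bar>\<bar> \<le> \<delta>/4"
  shows "max 0 (min b \<rho> - max a (-\<rho>)) + \<delta>/4 \<le> min ((b-a)/2) \<rho> - max (-((b-a)/2)) (-\<rho>)"
proof -
  have l: "\<delta> \<le> b - a" using am mb by linarith
  have "\<delta>/2 < \<bar>m\<bar>"
  proof (rule ccontr)
    assume "\<not> \<delta>/2 < \<bar>m\<bar>"
    then have "b - a < 0" using outside[of 0] by simp
    with l \<delta> show False by linarith
  qed
  then have "b - a < 2 * m - \<delta> \<or> b - a < - 2 * m - \<delta>"
    using outside[of "m - \<delta>/2"] outside[of "m + \<delta>/2"] \<delta> by (cases "0 \<le> m") (auto simp: field_simps)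
  moreover have "\<bar>m\<bar> - \<delta>/4 \<le> \<rho>" "\<rho> \<le> \<bar>m\<bar> + \<delta>/4" using \<rho>[unfolded abs_le_iff] by linarith+
  ultimately have "b - a \<le> 2 * \<rho> \<and> min b \<rho> - max a (-\<rho>) \<le> (b - a) - \<delta>/4"
    using l \<delta> am mb by (auto simp: min_def max_def abs_if)
  then have "min ((b-a)/2) \<rho> - max (-((b-a)/2)) (-\<rho>) = b - a"
    and "max 0 (min b \<rho> - max a (-\<rho>)) \<le> (b - a) - \<delta>/4"
    using l \<delta> by (auto simp: min_def max_def field_simps)
  then show ?thesis using l \<delta> by (auto simp: max_def)
qed

lemma compact_Int_cball_borel: "compact S \<Longrightarrow> S \<inter> cball 0 r \<in> sets borel"
  by (intro borel_closed closed_Int compact_imp_closed closed_cball)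

lemma emeasure_lborel_Icc_ennreal: "emeasure lborel {l..h::real} = ennreal (h - l)"
  by (cases "l \<le> h") (auto simp: ennreal_neg)

lemma slices_at_chord:
  fixes K :: "'a::euclidean_space set"
  assumes u: "norm u = 1" and w: "w \<bullet> u = 0" and chord: "{t. w + t *\<^sub>R u \<in> K} = {a..b}"
    and "a \<le> b" and "norm w \<le> r"
  defines "\<rho> \<equiv> sqrt (r\<^sup>2 - (norm w)\<^sup>2)"
  shows "line_slice u (K \<inter> cball 0 r) w = ennreal (min b \<rho> - max a (-\<rho>))"
    and "line_slice u (steiner u K \<inter> cball 0 r) w =
      ennreal (min ((b-a)/2) \<rho> - max (-((b-a)/2)) (-\<rho>))"
proof -
  have "w + a *\<^sub>R u \<in> K" using chord \<open>a \<le> b\<close> by auto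
  then have wK: "w \<in> perp_proj u ` K"
    by (intro image_eqI[where f="perp_proj u" and x="w + a *\<^sub>R u"]) (simp_all add: perp_proj_line[OF u w])
  have len: "chord_length u K w = b - a" using \<open>a \<le> b\<close> by (simp add: chord_length_def chord)
  have ball: "{t. w + t *\<^sub>R u \<in> cball 0 r} = {-\<rho>..\<rho>}"
    using cball_chord[OF u w, of r] \<open>norm w \<le> r\<close> by (simp add: \<rho>_def)
  have split: "{t. w + t *\<^sub>R u \<in> S \<inter> cball 0 r} = {t. w + t *\<^sub>R u \<in> S} \<inter> {-\<rho>..\<rho>}" for S
    using ball by auto
  show "line_slice u (K \<inter> cball 0 r) w = ennreal (min b \<rho> - max a (-\<rho>))"
    unfolding split chord Int_atLeastAtMost by (simp add: emeasure_lborel_Icc_ennreal)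
  show "line_slice u (steiner u K \<inter> cball 0 r) w =
      ennreal (min ((b-a)/2) \<rho> - max (-((b-a)/2)) (-\<rho>))"
    unfolding split steiner_chord[OF u w wK] len Int_atLeastAtMost
    by (simp add: emeasure_lborel_Icc_ennreal)
qed

lemma steiner_line_slice_le:
  fixes K :: "'a::euclidean_space set"
  assumes K: "compact K" "convex K" and u: "norm u = 1"
  shows "line_slice u (K \<inter> cball 0 r) z \<le> line_slice u (steiner u K \<inter> cball 0 r) z"
proof -
  define w where "w = perp_proj u z"
  have w: "w \<bullet> u = 0" unfolding w_def by (rule perp_proj_orthogonal[OF u])
  have "line_slice u (K \<inter> cball 0 r) w \<le> line_slice u (steiner u K \<inter> cball 0 r) w"
  proof (cases "w \<in> perp_proj u ` K \<and> norm w \<le> r")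
    case False
    then have "{t. w + t *\<^sub>R u \<in> K \<inter> cball 0 r} = {}"
      using chord_outside_projection[OF u w, of K] cball_chord[OF u w, of r] by (auto split: if_splits)
    then show ?thesis by (simp only: emeasure_empty zero_le)
  next
    case True
    then have wr: "norm w \<le> r" by simp
    obtain a b where ab: "a \<le> b" "{t. w + t *\<^sub>R u \<in> K} = {a..b}"
      using chord_interval[OF K u] True by blast
    have "0 \<le> sqrt (r\<^sup>2 - (norm w)\<^sup>2)" using wr by (simp add: power_mono)
    then show ?thesis
      unfolding slices_at_chord[OF u w ab(2) ab(1) wr]
      by (intro ennreal_leI interval_overlap_le_centered ab(1))
  qed
  moreover have "line_slice u (S \<inter> cball 0 r) z = line_slice u (S \<inter> cball 0 r) w"
    if "compact S" for S
    unfolding w_def by (rule line_slice_perp_proj[OF compact_Int_cball_borel[OF that]])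
  ultimately show ?thesis using K(1) steiner_compact[OF K u] by metis
qed

lemma steiner_line_slice_gap:
  fixes K :: "'a::euclidean_space set"
  assumes K: "compact K" "convex K" and u: "norm u = 1" and w: "w \<bullet> u = 0" and \<delta>: "0 < \<delta>"
    and seg: "\<And>t. \<bar>t - m\<bar> \<le> \<delta>/2 \<Longrightarrow> w + t *\<^sub>R u \<in> K \<and> w + t *\<^sub>R u \<notin> steiner u K"
    and wr: "norm w \<le> r" and \<rho>: "\<bar>sqrt (r\<^sup>2 - (norm w)\<^sup>2) - \<bar>m\<bar>\<bar> \<le> \<delta>/4"
  shows "line_slice u (K \<inter> cball 0 r) w + ennreal (\<delta>/4) \<le> line_slice u (steiner u K \<inter> cball 0 r) w"
proof -
  have "w + m *\<^sub>R u \<in> K" using seg[of m] \<delta> by simp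
  then have wK: "w \<in> perp_proj u ` K"
    by (intro image_eqI[where f="perp_proj u" and x="w + m *\<^sub>R u"]) (simp_all add: perp_proj_line[OF u w])
  obtain a b where ab: "a \<le> b" "{t. w + t *\<^sub>R u \<in> K} = {a..b}" "chord_length u K w = b - a"
    using chord_interval[OF K u wK] by blast
  have "m - \<delta>/2 \<in> {t. w + t *\<^sub>R u \<in> K}" "m + \<delta>/2 \<in> {t. w + t *\<^sub>R u \<in> K}"
    using seg[of "m - \<delta>/2"] seg[of "m + \<delta>/2"] \<delta> by simp_all
  then have am: "a \<le> m - \<delta>/2" and mb: "m + \<delta>/2 \<le> b" unfolding ab(2) by simp_all
  have outside: "(b - a)/2 < \<bar>t\<bar>" if "\<bar>t - m\<bar> \<le> \<delta>/2" for t
  proof -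
    have "\<not> \<bar>t\<bar> \<le> chord_length u K w / 2" using seg[OF that] steiner_mem[OF u w, of t K] wK by blast
    then show ?thesis unfolding ab(3) by simp
  qed
  define X where "X = min b (sqrt (r\<^sup>2 - (norm w)\<^sup>2)) - max a (- sqrt (r\<^sup>2 - (norm w)\<^sup>2))"
  have "line_slice u (K \<inter> cball 0 r) w + ennreal (\<delta>/4) = ennreal (max 0 X) + ennreal (\<delta>/4)"
    unfolding slices_at_chord[OF u w ab(2) ab(1) wr] X_def[symmetric] by (simp add: max_def ennreal_neg)
  also have "\<dots> = ennreal (max 0 X + \<delta>/4)" using \<delta> by (simp add: ennreal_plus)
  also have "\<dots> \<le> line_slice u (steiner u K \<inter> cball 0 r) w"
    unfolding slices_at_chord[OF u w ab(2) ab(1) wr] X_def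
    by (intro ennreal_leI interval_overlap_gap[OF \<delta> am mb outside \<rho>])
  finally show ?thesis .
qed

section \<open>Steiner symmetrization and the volumes of K \<inter> rB\<close>

lemma measure_lebesgue_Int_cball:
  "compact S \<Longrightarrow> measure lebesgue (S \<inter> cball 0 r) = measure lborel (S \<inter> cball 0 r)"
  using compact_Int_cball_borel[of S r] by simp

text \<open>Steiner symmetrization does not decrease the volume inside any ball rB; this is the
  slice comparison with no extra term.\<close>

theorem steiner_layer_volume_le:
  fixes K :: "'a::euclidean_space set"
  assumes K: "compact K" "convex K" and u: "norm u = 1"
  shows "measure lebesgue (K \<inter> cball 0 r) \<le> measure lebesgue (steiner u K \<inter> cball 0 r)"
proof -
  have sK: "compact (steiner u K)" by (rule steiner_compact[OF K u])
  have "measure lborel (K \<inter> cball 0 r) + 0 * measure lborel ({} :: 'a set) \<le> measure lborel (steiner u K \<inter> cball 0 r)"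
    by (rule measure_le_by_slices[where u=u])
      (use steiner_line_slice_le[OF K u] K(1) sK u in \<open>auto intro: compact_Int_cball_borel\<close>)
  then show ?thesis using K(1) sK by (simp add: measure_lebesgue_Int_cball)
qed

text \<open>The part of the slab 0 \<le> z \<bullet> u \<le> 1 lying over the \<eta>-ball around c in the hyperplane
  orthogonal to u.  It is a set of positive finite volume whose slices have length at most 1.\<close>

definition cylinder :: "'a::euclidean_space \<Rightarrow> 'a \<Rightarrow> real \<Rightarrow> 'a set" where
  "cylinder u c \<eta> = {z. norm (perp_proj u z - c) < \<eta> \<and> 0 \<le> z \<bullet> u \<and> z \<bullet> u \<le> 1}"

lemma cylinder_borel[measurable]: "cylinder u c \<eta> \<in> sets borel"
  unfolding cylinder_def by measurable

lemma bounded_cylinder: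
  assumes u: "norm u = 1" shows "bounded (cylinder u c \<eta>)"
proof -
  have "norm z \<le> norm c + \<eta> + 1" if "z \<in> cylinder u c \<eta>" for z
  proof -
    have "norm z \<le> norm (perp_proj u z) + \<bar>z \<bullet> u\<bar>"
      using norm_triangle_ineq[of "perp_proj u z" "(z \<bullet> u) *\<^sub>R u"] u by (simp add: perp_proj_decomp)
    moreover have "norm (perp_proj u z) \<le> norm c + \<eta>"
      using that norm_triangle_ineq2[of "perp_proj u z" c] unfolding cylinder_def by simp
    ultimately show ?thesis using that unfolding cylinder_def by simp
  qed
  then show ?thesis unfolding bounded_iff by blast
qed

lemma cylinder_measure_pos:
  fixes u c :: "'a::euclidean_space"
  assumes u: "norm u = 1" and c: "c \<bullet> u = 0" and \<eta>: "0 < \<eta>"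
  shows "0 < measure lborel (cylinder u c \<eta>)"
proof -
  define x where "x = c + (1/2) *\<^sub>R u"
  define \<epsilon> where "\<epsilon> = min \<eta> (1/2)"
  have "ball x \<epsilon> \<subseteq> cylinder u c \<eta>"
  proof
    fix z assume "z \<in> ball x \<epsilon>"
    then have d: "norm (z - x) < \<epsilon>" by (simp add: dist_norm norm_minus_commute)
    have "norm (perp_proj u z - c) = norm (perp_proj u (z - x))"
      by (simp add: perp_proj_diff x_def perp_proj_line[OF u c])
    also have "\<dots> \<le> norm (z - x)" by (rule norm_perp_proj_le[OF u])
    finally have "norm (perp_proj u z - c) < \<eta>" using d unfolding \<epsilon>_def by simp
    moreover have "\<bar>(z - x) \<bullet> u\<bar> \<le> norm (z - x)" using Cauchy_Schwarz_ineq2[of "z - x" u] u by simp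
    then have "\<bar>z \<bullet> u - 1/2\<bar> < 1/2"
      using d inner_line[OF u c, of "1/2"] unfolding \<epsilon>_def x_def by (simp add: inner_diff_left)
    then have "0 \<le> z \<bullet> u" "z \<bullet> u \<le> 1" by linarith+
    ultimately show "z \<in> cylinder u c \<eta>" unfolding cylinder_def by auto
  qed
  then have "emeasure lborel (ball x \<epsilon>) \<le> emeasure lborel (cylinder u c \<eta>)"
    by (rule emeasure_mono) simp
  moreover have "0 < emeasure lborel (ball x \<epsilon>)" using \<eta> by (simp add: \<epsilon>_def emeasure_ball)
  moreover have "emeasure lborel (cylinder u c \<eta>) < \<infinity>"
    by (rule emeasure_bounded_finite[OF bounded_cylinder[OF u]])
  ultimately show ?thesis by (simp add: measure_def enn2real_positive_iff)
qed

lemma line_slice_cylinder: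
  assumes u: "norm u = 1"
  shows "line_slice u (cylinder u c \<eta>) z \<le> 1"
    and "\<not> norm (perp_proj u z - c) < \<eta> \<Longrightarrow> line_slice u (cylinder u c \<eta>) z = 0"
proof -
  have "{t. z + t *\<^sub>R u \<in> cylinder u c \<eta>} \<subseteq> {- (z \<bullet> u) .. 1 - z \<bullet> u}"
    unfolding cylinder_def using u by (auto simp: inner_add_left norm_eq_1)
  then have "line_slice u (cylinder u c \<eta>) z \<le> emeasure lborel {- (z \<bullet> u) .. 1 - z \<bullet> u}"
    by (rule emeasure_mono) simp
  then show "line_slice u (cylinder u c \<eta>) z \<le> 1" by simp
  assume "\<not> norm (perp_proj u z - c) < \<eta>"
  then have "{t. z + t *\<^sub>R u \<in> cylinder u c \<eta>} = {}"
    unfolding cylinder_def by (auto simp: perp_proj_add_line[OF u])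
  then show "line_slice u (cylinder u c \<eta>) z = 0" by (simp only: emeasure_empty)
qed

lemma steiner_layer_volume_gap:
  fixes K :: "'a::euclidean_space set"
  assumes K: "compact K" "convex K" and u: "norm u = 1" and \<delta>: "0 < \<delta>"
    and seg: "\<And>w t. w \<bullet> u = 0 \<Longrightarrow> norm (w - c) < \<eta> \<Longrightarrow> \<bar>t - m\<bar> \<le> \<delta>/2 \<Longrightarrow>
        w + t *\<^sub>R u \<in> K \<and> w + t *\<^sub>R u \<notin> steiner u K"
    and rad: "\<And>w. w \<bullet> u = 0 \<Longrightarrow> norm (w - c) < \<eta> \<Longrightarrow>
        norm w \<le> r \<and> \<bar>sqrt (r\<^sup>2 - (norm w)\<^sup>2) - \<bar>m\<bar>\<bar> \<le> \<delta>/4"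
  shows "measure lebesgue (K \<inter> cball 0 r) + \<delta>/4 * measure lborel (cylinder u c \<eta>)
      \<le> measure lebesgue (steiner u K \<inter> cball 0 r)"
proof -
  have sK: "compact (steiner u K)" by (rule steiner_compact[OF K u])
  have slices: "line_slice u (K \<inter> cball 0 r) z + ennreal (\<delta>/4) * line_slice u (cylinder u c \<eta>) z
      \<le> line_slice u (steiner u K \<inter> cball 0 r) z" for z
  proof (cases "norm (perp_proj u z - c) < \<eta>")
    case True
    define w where "w = perp_proj u z"
    have w: "w \<bullet> u = 0" unfolding w_def by (rule perp_proj_orthogonal[OF u])
    have near: "norm (w - c) < \<eta>" using True unfolding w_def .
    have same_line: "line_slice u (S \<inter> cball 0 r) z = line_slice u (S \<inter> cball 0 r) w"
      if "compact S" for S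
      unfolding w_def by (rule line_slice_perp_proj[OF compact_Int_cball_borel[OF that]])
    have "ennreal (\<delta>/4) * line_slice u (cylinder u c \<eta>) z \<le> ennreal (\<delta>/4) * 1"
      by (rule mult_left_mono[OF line_slice_cylinder(1)[OF u]]) simp
    then have "line_slice u (K \<inter> cball 0 r) z + ennreal (\<delta>/4) * line_slice u (cylinder u c \<eta>) z
        \<le> line_slice u (K \<inter> cball 0 r) z + ennreal (\<delta>/4)"
      by (intro add_left_mono) simp
    also have "\<dots> = line_slice u (K \<inter> cball 0 r) w + ennreal (\<delta>/4)"
      by (simp only: same_line[OF K(1)])
    also have "\<dots> \<le> line_slice u (steiner u K \<inter> cball 0 r) w"
    proof (rule steiner_line_slice_gap[OF K u w \<delta>])
      show "w + t *\<^sub>R u \<in> K \<and> w + t *\<^sub>R u \<notin> steiner u K" if "\<bar>t - m\<bar> \<le> \<delta>/2" for t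
        by (rule seg[OF w near that])
    qed (use rad[OF w near] in auto)
    also have "\<dots> = line_slice u (steiner u K \<inter> cball 0 r) z"
      by (simp only: same_line[OF sK])
    finally show ?thesis .
  next
    case False
    then show ?thesis using line_slice_cylinder(2)[OF u False] steiner_line_slice_le[OF K u] by simp
  qed
  have "measure lborel (K \<inter> cball 0 r) + \<delta>/4 * measure lborel (cylinder u c \<eta>)
      \<le> measure lborel (steiner u K \<inter> cball 0 r)"
    by (rule measure_le_by_slices[where u=u])
      (use slices K(1) sK u \<delta> bounded_cylinder[OF u] in \<open>auto intro: compact_Int_cball_borel\<close>)
  then show ?thesis using K(1) sK by (simp add: measure_lebesgue_Int_cball)
qed

section \<open>A uniform gap on an interval of radii\<close>

text \<open>A point of a convex body outside a closed set S has, nearby, a whole closed ball of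
  interior points of K avoiding S (interior points are dense in a convex body).\<close>

lemma ball_in_difference:
  fixes K S :: "'a::euclidean_space set"
  assumes K: "convex K" "closed K" "interior K \<noteq> {}" and S: "closed S" and p: "p \<in> K" "p \<notin> S"
  obtains q \<delta> where "0 < \<delta>" "cball q \<delta> \<subseteq> K - S"
proof -
  obtain \<epsilon> where \<epsilon>: "0 < \<epsilon>" "ball p \<epsilon> \<subseteq> - S"
    using p(2) S open_contains_ball[of "- S"] by auto
  have "p \<in> closure (interior K)"
    using convex_closure_interior[OF K(1,3)] closure_closed[OF K(2)] p(1) by simp
  then obtain q where q: "q \<in> interior K" "dist q p < \<epsilon>/2"
    using closure_approachable[of p "interior K"] \<epsilon> by (metis half_gt_zero)
  obtain e where e: "0 < e" "ball q e \<subseteq> K" using q(1) mem_interior by blast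
  define \<delta> where "\<delta> = min (e/2) (\<epsilon>/4)"
  have "cball q \<delta> \<subseteq> ball q e" using e(1) by (auto simp: \<delta>_def)
  moreover have "cball q \<delta> \<subseteq> ball p \<epsilon>"
  proof
    fix y assume "y \<in> cball q \<delta>"
    then have "dist q y \<le> \<epsilon>/4" unfolding \<delta>_def by simp
    then show "y \<in> ball p \<epsilon>" using q(2) dist_triangle[of p y q] \<epsilon> by (simp add: dist_commute)
  qed
  ultimately have "cball q \<delta> \<subseteq> K - S" using e(2) \<epsilon>(2) by auto
  moreover have "0 < \<delta>" unfolding \<delta>_def using e \<epsilon> by simp
  ultimately show ?thesis using that by blast
qed

text \<open>The half-chord sqrt (r^2 - |w|^2) of rB over w depends continuously on (w,r); at
  w = c and r = sqrt (|c|^2 + M^2) it equals M.\<close>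

lemma half_chord_near:
  fixes c :: "'a::real_normed_vector" and M e :: real
  assumes "0 < e" "e \<le> M"
  obtains \<eta> where "0 < \<eta>"
    "\<And>w r. dist w c < \<eta> \<Longrightarrow> \<bar>r - sqrt ((norm c)\<^sup>2 + M\<^sup>2)\<bar> < \<eta> \<Longrightarrow> 0 \<le> r \<Longrightarrow>
        norm w \<le> r \<and> \<bar>sqrt (r\<^sup>2 - (norm w)\<^sup>2) - M\<bar> < e"
proof -
  define r0 where "r0 = sqrt ((norm c)\<^sup>2 + M\<^sup>2)"
  define g where "g p = sqrt ((snd p)\<^sup>2 - (norm (fst p))\<^sup>2)" for p :: "'a \<times> real"
  have "g (c, r0) = M" using assms by (simp add: g_def r0_def)
  moreover have "isCont g (c, r0)" unfolding g_def by (intro continuous_intros)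
  ultimately obtain d where d: "0 < d" "\<And>p. dist p (c, r0) < d \<Longrightarrow> dist (g p) M < e"
    using \<open>0 < e\<close> unfolding continuous_at_eps_delta by metis
  show ?thesis
  proof (rule that[of "d/2"])
    show "0 < d/2" using d by simp
    fix w r assume w: "dist w c < d/2" and "\<bar>r - sqrt ((norm c)\<^sup>2 + M\<^sup>2)\<bar> < d/2" and "0 \<le> r"
    then have r: "\<bar>r - r0\<bar> < d/2" unfolding r0_def by simp
    have "dist (w, r) (c, r0) \<le> dist w c + dist r r0"
      unfolding dist_Pair_Pair using sqrt_sum_squares_le_sum_abs[of "dist w c" "dist r r0"] by simp
    then have "\<bar>g (w, r) - M\<bar> < e" using d(2)[of "(w, r)"] w r by (simp add: dist_real_def)
    then have close: "\<bar>sqrt (r\<^sup>2 - (norm w)\<^sup>2) - M\<bar> < e" by (simp add: g_def)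
    then have "0 < sqrt (r\<^sup>2 - (norm w)\<^sup>2)" using assms unfolding abs_less_iff by linarith
    then have "(norm w)\<^sup>2 \<le> r\<^sup>2" by simp
    then have "norm w \<le> r" using \<open>0 \<le> r\<close> power2_le_imp_le by blast
    with close show "norm w \<le> r \<and> \<bar>sqrt (r\<^sup>2 - (norm w)\<^sup>2) - M\<bar> < e" by simp
  qed
qed

text \<open>A closed ball around q = c + m u (c \<perp> u) inside K \<setminus> s_u K contains the segments of
  height \<delta> around m over all points near c.  Since the centre of every chord of K lies in
  s_u K, the height m of such a ball is bounded away from 0.\<close>

lemma ball_segments_outside_steiner:
  fixes K :: "'a::euclidean_space set"
  assumes u: "norm u = 1" and \<delta>: "0 < \<delta>" and ball: "cball q \<delta> \<subseteq> K - steiner u K"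
  shows "\<And>w t. norm (w - perp_proj u q) < \<delta>/2 \<Longrightarrow> \<bar>t - q \<bullet> u\<bar> \<le> \<delta>/2 \<Longrightarrow>
      w + t *\<^sub>R u \<in> K \<and> w + t *\<^sub>R u \<notin> steiner u K"
    and "\<delta>/4 < \<bar>q \<bullet> u\<bar>"
proof -
  define c where "c = perp_proj u q"
  define m where "m = q \<bullet> u"
  have c: "c \<bullet> u = 0" unfolding c_def by (rule perp_proj_orthogonal[OF u])
  have seg: "w + t *\<^sub>R u \<in> K \<and> w + t *\<^sub>R u \<notin> steiner u K"
    if "norm (w - c) < \<delta>/2" "\<bar>t - m\<bar> \<le> \<delta>/2" for w t
  proof -
    have eq: "w + t *\<^sub>R u - q = (w - c) + (t - m) *\<^sub>R u"
      using perp_proj_decomp[of u q] unfolding c_def m_def by (simp add: algebra_simps)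
    have "norm (w + t *\<^sub>R u - q) \<le> norm (w - c) + \<bar>t - m\<bar>"
      unfolding eq using norm_triangle_ineq[of "w - c" "(t - m) *\<^sub>R u"] u by simp
    then have "w + t *\<^sub>R u \<in> cball q \<delta>" using that by (simp add: dist_norm norm_minus_commute)
    then show ?thesis using ball by blast
  qed
  then show "\<And>w t. norm (w - perp_proj u q) < \<delta>/2 \<Longrightarrow> \<bar>t - q \<bullet> u\<bar> \<le> \<delta>/2 \<Longrightarrow>
      w + t *\<^sub>R u \<in> K \<and> w + t *\<^sub>R u \<notin> steiner u K"
    unfolding c_def m_def .
  show "\<delta>/4 < \<bar>q \<bullet> u\<bar>"
  proof (rule ccontr)
    assume small: "\<not> \<delta>/4 < \<bar>q \<bullet> u\<bar>"
    have "q \<in> cball q \<delta>" using \<delta> by simp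
    then have "c \<in> perp_proj u ` K" using ball unfolding c_def by blast
    moreover have "c + 0 *\<^sub>R u \<notin> steiner u K" using seg[of c 0] \<delta> small by (simp add: m_def)
    ultimately show False using steiner_mem[OF u c, of 0 K] by (simp add: chord_length_def)
  qed
qed

text \<open>Around an
  interior point q = c + m u of K \<setminus> s_u K there is a closed ball in K \<setminus> s_u K; the lines over
  the points near c then pass through segments of K outside s_u K around height m, and the
  radii r for which the half-chord of rB over those points is close to |m| form an interval.\<close>

theorem steiner_layer_volume_strict:
  fixes K :: "'a::euclidean_space set"
  assumes K: "compact K" "convex K" and int: "interior K \<noteq> {}" and u: "norm u = 1"
    and p: "p \<in> K" "p \<notin> steiner u K"
  obtains r1 r2 \<kappa> where "0 \<le> r1" "r1 < r2" "0 < \<kappa>"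
    "\<And>r. r1 \<le> r \<Longrightarrow> r \<le> r2 \<Longrightarrow>
      measure lebesgue (K \<inter> cball 0 r) + \<kappa> \<le> measure lebesgue (steiner u K \<inter> cball 0 r)"
proof -
  obtain q \<delta> where \<delta>: "0 < \<delta>" and ball: "cball q \<delta> \<subseteq> K - steiner u K"
    using ball_in_difference[OF K(2) compact_imp_closed[OF K(1)] int
        compact_imp_closed[OF steiner_compact[OF K u]] p] .
  define c where "c = perp_proj u q"
  define m where "m = q \<bullet> u"
  have c: "c \<bullet> u = 0" unfolding c_def by (rule perp_proj_orthogonal[OF u])
  have seg: "w + t *\<^sub>R u \<in> K \<and> w + t *\<^sub>R u \<notin> steiner u K"
    if "norm (w - c) < \<delta>/2" "\<bar>t - m\<bar> \<le> \<delta>/2" for w t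
    using ball_segments_outside_steiner(1)[OF u \<delta> ball that[unfolded c_def m_def]]
    unfolding c_def m_def .
  have M: "\<delta>/4 < \<bar>m\<bar>" unfolding m_def by (rule ball_segments_outside_steiner(2)[OF u \<delta> ball])
  obtain \<eta>0 where \<eta>0: "0 < \<eta>0" and near: "\<And>w r. dist w c < \<eta>0 \<Longrightarrow>
      \<bar>r - sqrt ((norm c)\<^sup>2 + \<bar>m\<bar>\<^sup>2)\<bar> < \<eta>0 \<Longrightarrow> 0 \<le> r \<Longrightarrow>
      norm w \<le> r \<and> \<bar>sqrt (r\<^sup>2 - (norm w)\<^sup>2) - \<bar>m\<bar>\<bar> < \<delta>/4"
    using half_chord_near[of "\<delta>/4" "\<bar>m\<bar>" c] \<delta> M by auto
  define \<eta> where "\<eta> = min \<eta>0 (\<delta>/2)"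
  define r1 where "r1 = sqrt ((norm c)\<^sup>2 + \<bar>m\<bar>\<^sup>2)"
  define \<kappa> where "\<kappa> = \<delta>/4 * measure lborel (cylinder u c \<eta>)"
  have \<eta>: "0 < \<eta>" unfolding \<eta>_def using \<eta>0 \<delta> by simp
  show ?thesis
  proof (rule that[of r1 "r1 + \<eta>/2" \<kappa>])
    show "0 \<le> r1" "r1 < r1 + \<eta>/2" using \<eta> by (simp_all add: r1_def)
    show "0 < \<kappa>" unfolding \<kappa>_def using \<delta> cylinder_measure_pos[OF u c \<eta>] by simp
    fix r assume r: "r1 \<le> r" "r \<le> r1 + \<eta>/2"
    have "0 \<le> r" using r \<open>0 \<le> r1\<close> by linarith
    show "measure lebesgue (K \<inter> cball 0 r) + \<kappa> \<le> measure lebesgue (steiner u K \<inter> cball 0 r)"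
      unfolding \<kappa>_def
    proof (rule steiner_layer_volume_gap[OF K u \<delta>])
      fix w assume "norm (w - c) < \<eta>"
      then have w: "norm (w - c) < \<eta>0" "norm (w - c) < \<delta>/2" unfolding \<eta>_def by auto
      show "norm w \<le> r \<and> \<bar>sqrt (r\<^sup>2 - (norm w)\<^sup>2) - \<bar>m\<bar>\<bar> \<le> \<delta>/4"
        using near[of w r] w(1) r \<eta> \<open>0 \<le> r\<close> unfolding \<eta>_def r1_def by (force simp: dist_norm)
      show "w + t *\<^sub>R u \<in> K \<and> w + t *\<^sub>R u \<notin> steiner u K" if "\<bar>t - m\<bar> \<le> \<delta>/2" for t
        using seg[OF w(2) that] .
    qed
  qed
qed

section \<open>The layering function\<close>

text \<open>For a set of finite volume, r \<mapsto> V(S \<inter> rB) is monotone and bounded by V(S), so the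
  integrand of the layering function is integrable.\<close>

lemma layer_volume_mono:
  fixes S :: "'a::euclidean_space set"
  assumes "S \<in> lmeasurable" and "r \<le> s"
  shows "measure lebesgue (S \<inter> cball 0 r) \<le> measure lebesgue (S \<inter> cball 0 s)"
  using assms by (intro measure_mono_fmeasurable) (auto intro: fmeasurable_Int_fmeasurable)

lemma layer_volume_le:
  fixes S :: "'a::euclidean_space set"
  assumes "S \<in> lmeasurable"
  shows "measure lebesgue (S \<inter> cball 0 r) \<le> measure lebesgue S"
  using assms by (intro measure_mono_fmeasurable) (auto intro: fmeasurable_Int_fmeasurable)

definition layering_integrand :: "'a::euclidean_space set \<Rightarrow> real \<Rightarrow> real" where
  "layering_integrand S r = indicator {0..} r * (measure lebesgue (S \<inter> cball 0 r) * exp (- (r\<^sup>2)))"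

lemma layering_eq_integral: "layering S = (\<integral>r. layering_integrand S r \<partial>lborel)"
  unfolding layering_def set_lebesgue_integral_def layering_integrand_def by simp

lemma integrable_layering_integrand:
  fixes S :: "'a::euclidean_space set"
  assumes S: "S \<in> lmeasurable"
  shows "integrable lborel (layering_integrand S)"
proof (rule Bochner_Integration.integrable_bound)
  show "integrable lborel (\<lambda>r. measure lebesgue S * (indicator {0..} r *\<^sub>R exp (- r\<^sup>2)))"
    using integrable.intros[OF gaussian_moment_0] by simp
  have [measurable]: "(\<lambda>r. measure lebesgue (S \<inter> cball 0 r)) \<in> borel_measurable borel"
    by (rule borel_measurable_mono) (simp add: mono_def layer_volume_mono[OF S])
  show "layering_integrand S \<in> borel_measurable lborel"
    unfolding layering_integrand_def by measurable
  show "AE r in lborel. norm (layering_integrand S r) \<le> norm (measure lebesgue S * (indicator {0..} r *\<^sub>R exp (- r\<^sup>2)))"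
    using layer_volume_le[OF S]
    by (intro AE_I2) (auto simp: layering_integrand_def indicator_def abs_mult intro!: mult_right_mono)
qed

lemma layering_integrand_mono:
  assumes "measure lebesgue (S \<inter> cball 0 r) \<le> measure lebesgue (T \<inter> cball 0 r)"
  shows "layering_integrand S r \<le> layering_integrand T r"
  using assms by (simp add: layering_integrand_def indicator_def)

lemma layering_mono:
  fixes S T :: "'a::euclidean_space set"
  assumes "S \<in> lmeasurable" "T \<in> lmeasurable"
    and le: "\<And>r. measure lebesgue (S \<inter> cball 0 r) \<le> measure lebesgue (T \<inter> cball 0 r)"
  shows "layering S \<le> layering T"
  unfolding layering_eq_integral
  by (intro integral_mono integrable_layering_integrand layering_integrand_mono le assms)

lemma layering_strict_mono:
  fixes S T :: "'a::euclidean_space set"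
  assumes S: "S \<in> lmeasurable" and T: "T \<in> lmeasurable"
    and le: "\<And>r. measure lebesgue (S \<inter> cball 0 r) \<le> measure lebesgue (T \<inter> cball 0 r)"
    and r12: "0 \<le> r1" "r1 < r2" and \<kappa>: "0 < \<kappa>"
    and gap: "\<And>r. r1 \<le> r \<Longrightarrow> r \<le> r2 \<Longrightarrow>
      measure lebesgue (S \<inter> cball 0 r) + \<kappa> \<le> measure lebesgue (T \<inter> cball 0 r)"
  shows "layering S < layering T"
proof -
  define c where "c = \<kappa> * exp (- (r2\<^sup>2))"
  define h where "h r = indicator {r1..r2} r * c" for r :: real
  have h_int: "integrable lborel h" unfolding h_def
    by (intro integrable_mult_left integrable_real_indicator) (auto simp: emeasure_lborel_Icc_ennreal)
  have bound: "layering_integrand S r + h r \<le> layering_integrand T r" for r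
  proof (cases "r1 \<le> r \<and> r \<le> r2")
    case True
    then have "0 \<le> r" using r12 by linarith
    then have "c \<le> \<kappa> * exp (- (r\<^sup>2))" using True \<kappa> by (simp add: c_def power_mono)
    then have "layering_integrand S r + h r
        \<le> (measure lebesgue (S \<inter> cball 0 r) + \<kappa>) * exp (- (r\<^sup>2))"
      using True \<open>0 \<le> r\<close> by (simp add: layering_integrand_def h_def algebra_simps)
    also have "\<dots> \<le> layering_integrand T r"
      using gap True \<open>0 \<le> r\<close> by (simp add: layering_integrand_def)
    finally show ?thesis .
  next
    case False
    then have "h r = 0" by (simp add: h_def)
    then show ?thesis using layering_integrand_mono[OF le[of r]] by simp
  qed
  have "layering S + (r2 - r1) * c = (\<integral>r. layering_integrand S r + h r \<partial>lborel)"
    using integrable_layering_integrand[OF S] h_int r12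
    by (simp add: layering_eq_integral h_def)
  also have "\<dots> \<le> layering T"
    unfolding layering_eq_integral using integrable_layering_integrand[OF S] h_int
    by (intro integral_mono bound integrable_layering_integrand[OF T]) simp
  finally have "layering S + (r2 - r1) * c \<le> layering T" .
  moreover have "0 < (r2 - r1) * c" using r12 \<kappa> by (simp add: c_def)
  ultimately show ?thesis by linarith
qed

theorem theorem3p1:
  fixes K :: "'a::euclidean_space set" and u :: 'a
  assumes "compact K" and "convex K" and "K \<noteq> {}" and "norm u = 1"
  shows "layering (steiner u K) \<ge> layering K \<and>
         (interior K \<noteq> {} \<longrightarrow> (layering (steiner u K) = layering K \<longleftrightarrow> steiner u K = K))"
proof -
  have K: "compact K" "convex K" and u: "norm u = 1" using assms by auto
  have sK: "steiner u K \<in> lmeasurable" and K_lm: "K \<in> lmeasurable"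
    using lmeasurable_compact steiner_compact[OF K u] K(1) by auto
  note le = steiner_layer_volume_le[OF K u]
  have "steiner u K = K" if "interior K \<noteq> {}" and eq: "layering (steiner u K) = layering K"
  proof -
    have "K \<subseteq> steiner u K"
    proof
      fix p assume "p \<in> K"
      show "p \<in> steiner u K"
      proof (rule ccontr)
        assume "p \<notin> steiner u K"
        then obtain r1 r2 \<kappa> where "0 \<le> r1" "r1 < r2" "0 < \<kappa>" "\<And>r. r1 \<le> r \<Longrightarrow> r \<le> r2 \<Longrightarrow>
            measure lebesgue (K \<inter> cball 0 r) + \<kappa> \<le> measure lebesgue (steiner u K \<inter> cball 0 r)"
          using steiner_layer_volume_strict[OF K \<open>interior K \<noteq> {}\<close> u \<open>p \<in> K\<close>] by blast
        then have "layering K < layering (steiner u K)"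
          using layering_strict_mono[OF K_lm sK le] by blast
        with eq show False by simp
      qed
    qed
    then show ?thesis by (rule steiner_eq_if_superset[OF K u])
  qed
  then show ?thesis using layering_mono[OF K_lm sK le] by auto
qed

end
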